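(* Among the $q-1$ $T$-sls-pencils there is exactly one Type-II-$T$-sls-pencil and there are $q-2$ Type-III-$T$-sls-pencils. Moreover: (1) if $q$ is even, the Type-II-$T$-sls-pencil meets the line $m_T$ in a Type-II-$T$-sls, and each Type-III-$T$-sls-pencil meets $m_T$ in a Type-III-$T$-sls; (2) if $q$ is odd, the Type-II-$T$-sls-pencil meets $m_T$ in a Type-III-$T$-sls, one Type-III-$T$-sls-pencil meets $m_T$ in a Type-II-$T$-sls, and the remaining $q-3$ Type-III-$T$-sls-pencils meet $m_T$ in Type-III-$T$-slses.
   Context: Let $q$ be a prime power, $\mathbb{F}_{q^3}^*=\mathbb{F}_{q^3}\setminus\{0\}$. Points of $\mathrm{PG}(2,q^3)$ have homogeneous coordinates $(x,y,z)$ and lines $[a,b,c]$. Let $\phi$ be the collineation $(x,y,z)\mapsto(z^q,x^q,y^q)$, acting on lines by $[d,e,f]\mapsto[f^q,d^q,e^q]$; its fixed points form the subplane $\mathcal P_{2,q}=\{(x,x^q,x^{q^2}):x\in\mathbb{F}_{q^3}^*\}$. A point has Type I, II or III according as its $\phi$-orbit is one point, three collinear points, or three non-collinear points; a line has Type I, II or III according as its $\phi$-orbit is one line, three concurrent lines, or three non-concurrent lines. Let $T=(0,0,1)$, $T^\phi=(1,0,0)$, $T^{\phi^2}=(0,1,0)$ and $m_T=T^\phi T^{\phi^2}$ the line $[0,0,1]$. Let $\mathsf S_T=\{\psi_t:t\in\mathbb{F}_{q^3}^*\}$ where $\psi_t:(x,y,z)\mapsto(tx,t^qy,t^{q^2}z)$.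 A $T$-sls is a point orbit of $\mathsf S_T$ of size $q^2+q+1$ contained in $m_T$ (there are $q-1$ of them, namely the sets $\{(x\theta,x^q,0):x\in\mathbb{F}_{q^3}^*\}$, $\theta\in\mathbb{F}_{q^3}^*$); it is Type-X if all its points have Type X. For a $T$-sls $\mathcal S$, the pencil $T\mathcal S=\{TX:X\in\mathcal S\}$ is a $T$-sls-pencil (it meets $m_T$ in $\mathcal S$); it is called Type-X if all its lines have Type X. *)

theory Defs
  imports Main "HOL-Computational_Algebra.Primes"
begin

(* Homogeneous coordinate triples over a field 'a (intended: GF(q^3)). *)
type_synonym 'a vec3 = "'a \<times> 'a \<times> 'a"

definition pclass :: "'a::field vec3 \<Rightarrow> 'a vec3 set" where
  "pclass v = (case v of (x, y, z) \<Rightarrow> {(c * x, c * y, c * z) | c. c \<noteq> 0})"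

(* Elements of PG(2,F): classes of nonzero triples. Points and lines are
   both represented this way (points (x,y,z), lines [a,b,c]). *)
definition is_pelem :: "'a::field vec3 set \<Rightarrow> bool" where
  "is_pelem P \<longleftrightarrow> (\<exists>v. v \<noteq> (0, 0, 0) \<and> P = pclass v)"

definition incident :: "'a::field vec3 set \<Rightarrow> 'a vec3 set \<Rightarrow> bool" where
  "incident P L \<longleftrightarrow> (\<exists>x y z a b c. (x, y, z) \<in> P \<and> (a, b, c) \<in> L \<and> a * x + b * y + c * z = 0)"

definition phi_v :: "nat \<Rightarrow> 'a::field vec3 \<Rightarrow> 'a vec3" where
  "phi_v q v = (case v of (x, y, z) \<Rightarrow> (z ^ q, x ^ q, y ^ q))"

definition phi :: "nat \<Rightarrow> 'a::field vec3 set \<Rightarrow> 'a vec3 set" where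
  "phi q P = phi_v q ` P"

definition phi_orbit :: "nat \<Rightarrow> 'a::field vec3 set \<Rightarrow> 'a vec3 set set" where
  "phi_orbit q P = {P, phi q P, phi q (phi q P)}"

definition collinear_pts :: "'a::field vec3 set set \<Rightarrow> bool" where
  "collinear_pts S \<longleftrightarrow> (\<exists>L. is_pelem L \<and> (\<forall>X\<in>S. incident X L))"

definition concurrent_lines :: "'a::field vec3 set set \<Rightarrow> bool" where
  "concurrent_lines S \<longleftrightarrow> (\<exists>X. is_pelem X \<and> (\<forall>L\<in>S. incident X L))"

definition pt_type1 :: "nat \<Rightarrow> 'a::field vec3 set \<Rightarrow> bool" where
  "pt_type1 q P \<longleftrightarrow> card (phi_orbit q P) = 1"
definition pt_type2 :: "nat \<Rightarrow> 'a::field vec3 set \<Rightarrow> bool" where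
  "pt_type2 q P \<longleftrightarrow> card (phi_orbit q P) = 3 \<and> collinear_pts (phi_orbit q P)"
definition pt_type3 :: "nat \<Rightarrow> 'a::field vec3 set \<Rightarrow> bool" where
  "pt_type3 q P \<longleftrightarrow> card (phi_orbit q P) = 3 \<and> \<not> collinear_pts (phi_orbit q P)"

definition line_type1 :: "nat \<Rightarrow> 'a::field vec3 set \<Rightarrow> bool" where
  "line_type1 q L \<longleftrightarrow> card (phi_orbit q L) = 1"
definition line_type2 :: "nat \<Rightarrow> 'a::field vec3 set \<Rightarrow> bool" where
  "line_type2 q L \<longleftrightarrow> card (phi_orbit q L) = 3 \<and> concurrent_lines (phi_orbit q L)"
definition line_type3 :: "nat \<Rightarrow> 'a::field vec3 set \<Rightarrow> bool" where
  "line_type3 q L \<longleftrightarrow> card (phi_orbit q L) = 3 \<and> \<not> concurrent_lines (phi_orbit q L)"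

definition ptT :: "'a::field vec3 set" where "ptT = pclass (0, 0, 1)"
definition lineMT :: "'a::field vec3 set" where "lineMT = pclass (0, 0, 1)"

definition psi_v :: "nat \<Rightarrow> 'a::field \<Rightarrow> 'a vec3 \<Rightarrow> 'a vec3" where
  "psi_v q t v = (case v of (x, y, z) \<Rightarrow> (t * x, t ^ q * y, t ^ (q ^ 2) * z))"

definition ST_orbit :: "nat \<Rightarrow> 'a::field vec3 set \<Rightarrow> 'a vec3 set set" where
  "ST_orbit q P = {psi_v q t ` P | t. t \<noteq> 0}"

definition T_slses :: "nat \<Rightarrow> 'a::field vec3 set set set" where
  "T_slses q = {Ob. \<exists>P. is_pelem P \<and> Ob = ST_orbit q P \<and> card Ob = q ^ 2 + q + 1
                      \<and> (\<forall>X\<in>Ob. incident X lineMT)}"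

definition sls_pencil :: "'a::field vec3 set set \<Rightarrow> 'a vec3 set set" where
  "sls_pencil S = {L. is_pelem L \<and> incident ptT L \<and> (\<exists>X\<in>S. incident X L)}"

definition meet_mT :: "'a::field vec3 set set \<Rightarrow> 'a vec3 set set" where
  "meet_mT Pc = {X. is_pelem X \<and> incident X lineMT \<and> (\<exists>L\<in>Pc. incident X L)}"

end

(*
  The norm N x = x ^ (q^2 + q + 1) maps the nonzero elements of the field of order q^3 onto the
  q - 1 nonzero elements of its subfield of order q, with fibres of size q^2 + q + 1.  A point of
  m_T other than T^phi is (theta, 1, 0), and psi_t sends it to (theta * t^(1-q), 1, 0); by
  Hilbert's Theorem 90 the factors t^(1-q) are exactly the elements of norm 1.  Hence the T-slses
  are the norm fibres {theta. N theta = c}, and their pencils consist of the lines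
  [1, -theta, 0] through T.  The phi-orbit of (theta, 1, 0) is collinear iff N theta = -1, and
  the phi-orbit of [1, -theta, 0] is concurrent iff N (-theta) = -1, i.e. (N being odd) iff
  N theta = 1.  So the Type-II pencil is the fibre c = 1, the Type-II sls is the fibre c = -1,
  and the two coincide exactly when -1 = 1, i.e. when q is even.
*)

theory Submission
  imports Defs "HOL-Computational_Algebra.Polynomial" "HOL-Number_Theory.Residues"
begin

section \<open>Powers in the unit group of a finite field\<close>

lemma finite_field_card_ge_2: "2 \<le> card (UNIV :: 'a::{field,finite} set)"
  using card_mono[of UNIV "{0, 1 :: 'a}"] by simp

lemma card_nonzero_elements: "card (- {0 :: 'a::{field,finite}}) = card (UNIV :: 'a set) - 1"
  unfolding Compl_eq_Diff_UNIV by (rule card_Diff_singleton) simp_all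

lemma finite_field_power_card_minus_one:
  fixes x :: "'a::{field,finite}"
  assumes "x \<noteq> 0"
  shows "x ^ (card (UNIV :: 'a set) - 1) = 1"
proof -
  have "(\<Prod>y \<in> - {0}. x * y) = (\<Prod>y \<in> - {0 :: 'a}. y)"
    using assms by (intro prod.reindex_bij_witness[of _ "\<lambda>y. y / x" "\<lambda>y. x * y"]) auto
  then have "x ^ card (- {0 :: 'a}) * (\<Prod>y \<in> - {0}. y) = 1 * (\<Prod>y \<in> - {0 :: 'a}. y)"
    by (simp add: prod.distrib)
  then show ?thesis
    by (simp add: card_nonzero_elements)
qed

lemma finite_field_power_card: "(x :: 'a::{field,finite}) ^ card (UNIV :: 'a set) = x"
proof (cases "x = 0")
  case False
  obtain n where "card (UNIV :: 'a set) = Suc n"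
    using finite_field_card_ge_2[where 'a = 'a] by (cases "card (UNIV :: 'a set)") auto
  then show ?thesis
    using finite_field_power_card_minus_one[OF False] by simp
qed (simp add: finite_UNIV_card_ge_0)

lemma card_roots_of_unity_le:
  assumes "d > 0"
  shows "card {x :: 'a::field. x ^ d = 1} \<le> d"
proof -
  let ?p = "Polynomial.monom (1 :: 'a) d - 1"
  have "poly ?p 0 \<noteq> 0"
    using assms by (simp add: poly_monom power_0_left)
  then have "?p \<noteq> 0"
    by auto
  moreover have "degree ?p \<le> d"
    by (intro degree_diff_le) (simp_all add: degree_monom_le)
  moreover have "{x. x ^ d = 1} = {x. poly ?p x = 0}"
    by (simp add: poly_monom)
  ultimately show ?thesis
    using card_poly_roots_bound[of ?p] by simp
qed

lemma power_fibre_eq: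
  fixes x\<^sub>0 :: "'a::field"
  assumes "x\<^sub>0 \<noteq> 0"
  shows "{x. x ^ d = x\<^sub>0 ^ d} = (\<lambda>u. x\<^sub>0 * u) ` {u. u ^ d = 1}"
proof (intro Set.set_eqI iffI)
  fix x
  assume "x \<in> {x. x ^ d = x\<^sub>0 ^ d}"
  then have "(x / x\<^sub>0) ^ d = 1" and "x = x\<^sub>0 * (x / x\<^sub>0)"
    using assms by (simp_all add: power_divide)
  then show "x \<in> (\<lambda>u. x\<^sub>0 * u) ` {u. u ^ d = 1}"
    by blast
qed (auto simp: power_mult_distrib)

lemma card_power_fibre:
  fixes x\<^sub>0 :: "'a::field"
  assumes "x\<^sub>0 \<noteq> 0"
  shows "card {x. x ^ d = x\<^sub>0 ^ d} = card {u :: 'a. u ^ d = 1}"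
  unfolding power_fibre_eq[OF assms] using assms by (intro card_image) (simp add: inj_on_def)

lemma card_nonzero_eq_roots_times_powers:
  assumes "d > 0"
  shows "card (- {0 :: 'a::{field,finite}}) =
    card {u :: 'a. u ^ d = 1} * card ((\<lambda>x. x ^ d) ` (- {0 :: 'a}))"
proof -
  let ?Im = "(\<lambda>x :: 'a. x ^ d) ` (- {0})"
  have "- {0} = (\<Union>c \<in> ?Im. {x. x ^ d = c})"
    using assms by (auto simp: power_0_left)
  moreover have "card (\<Union>c \<in> ?Im. {x. x ^ d = c}) = (\<Sum>c \<in> ?Im. card {x. x ^ d = c})"
    by (rule card_UN_disjoint) auto
  ultimately have "card (- {0 :: 'a}) = (\<Sum>c \<in> ?Im. card {x. x ^ d = c})"
    by simp
  also have "\<dots> = (\<Sum>c \<in> ?Im. card {u :: 'a. u ^ d = 1})"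
  proof (rule sum.cong)
    fix c
    assume "c \<in> ?Im"
    then obtain x :: 'a where "x \<noteq> 0" "c = x ^ d"
      by auto
    then show "card {x. x ^ d = c} = card {u :: 'a. u ^ d = 1}"
      using card_power_fibre by simp
  qed simp
  finally show ?thesis
    by simp
qed

(* Let n = d * e be the number of units, K m = {u. u ^ m = 1}, and I the image of the d-th
   power map on the units.  Then n = |K d| * |I| <= d * |I| <= d * |K e| <= d * e = n, since
   I is contained in K e (Fermat) and |K m| <= m (roots of a polynomial); so equality holds
   throughout. *)
lemma roots_of_unity_eq_powers:
  assumes "d * e = card (UNIV :: 'a::{field,finite} set) - 1"
  shows "card {u :: 'a. u ^ d = 1} = d"
    and "(\<lambda>a :: 'a. a ^ d) ` (- {0}) = {u. u ^ e = 1}"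
proof -
  let ?K = "{u :: 'a. u ^ d = 1}" and ?L = "{u :: 'a. u ^ e = 1}"
    and ?Im = "(\<lambda>a :: 'a. a ^ d) ` (- {0})"
  have "d * e > 0"
    using assms finite_field_card_ge_2[where 'a = 'a] by linarith
  then have "d > 0" "e > 0"
    by simp_all
  have sub: "?Im \<subseteq> ?L"
    using finite_field_power_card_minus_one by (auto simp: power_mult[symmetric] assms)
  have "1 \<in> ?Im"
    by (rule image_eqI[of _ _ 1]) simp_all
  then have "card ?Im > 0"
    by (auto simp: card_gt_0_iff)
  have "card ?K * card ?Im = d * e"
    using card_nonzero_eq_roots_times_powers[OF \<open>d > 0\<close>, where 'a = 'a]
      card_nonzero_elements[where 'a = 'a] assms
    by linarith
  moreover have "card ?K * card ?Im \<le> d * card ?Im"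
    by (rule mult_le_mono1) (rule card_roots_of_unity_le[OF \<open>d > 0\<close>])
  moreover have "d * card ?Im \<le> d * card ?L"
    by (rule mult_le_mono2) (simp add: sub card_mono)
  moreover have "d * card ?L \<le> d * e"
    by (rule mult_le_mono2) (rule card_roots_of_unity_le[OF \<open>e > 0\<close>])
  ultimately have KI: "card ?K * card ?Im = d * card ?Im" and IL: "d * card ?Im = d * card ?L"
    by linarith+
  show "card ?K = d"
    using mult_right_cancel[of "card ?Im" "card ?K" d] KI \<open>card ?Im > 0\<close> by linarith
  from IL \<open>d > 0\<close> have "card ?Im = card ?L"
    by simp
  then show "?Im = ?L"
    using sub by (simp add: card_subset_eq)
qed

lemma finite_field_minus_one_eq_one_iff:
  "(- 1 :: 'a::{field,finite}) = 1 \<longleftrightarrow> even (card (UNIV :: 'a set))"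
proof
  assume "(- 1 :: 'a) = 1"
  then have "of_nat 2 = (0 :: 'a)"
    by (metis add.right_inverse of_nat_1 of_nat_add one_add_one)
  then have "CHAR('a) dvd 2"
    by (simp only: of_nat_eq_0_iff_char_dvd)
  then have "CHAR('a) \<le> 2" "CHAR('a) \<noteq> 0"
    by (auto dest: dvd_imp_le intro: Nat.gr0I)
  moreover have "CHAR('a) \<noteq> 1"
    by simp
  ultimately have "CHAR('a) = 2"
    by linarith
  then show "even (card (UNIV :: 'a set))"
    using CHAR_dvd_CARD[where 'a = 'a] by simp
next
  assume "even (card (UNIV :: 'a set))"
  then have "odd (card (UNIV :: 'a set) - 1)"
    using finite_field_card_ge_2[where 'a = 'a] by simp
  then show "(- 1 :: 'a) = 1"
    using finite_field_power_card_minus_one[of "- 1 :: 'a"] by simp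
qed

section \<open>The norm from the field of order q^3 to its subfield of order q\<close>

definition rel_norm :: "nat \<Rightarrow> 'a::field \<Rightarrow> 'a" where
  "rel_norm q x = x ^ (q ^ 2 + q + 1)"

lemma odd_norm_exponent: "odd (q ^ 2 + q + 1 :: nat)"
proof -
  have "even (q * (q + 1))"
    by simp
  then show ?thesis
    by (simp add: power2_eq_square algebra_simps)
qed

lemma rel_norm_one: "rel_norm q 1 = 1"
  by (simp add: rel_norm_def)

lemma rel_norm_uminus: "rel_norm q (- x) = - rel_norm q x"
  unfolding rel_norm_def by (rule power_minus_odd[OF odd_norm_exponent])

lemma one_in_rel_norm_image: "1 \<in> rel_norm q ` (- {0 :: 'a::field})"
  by (rule image_eqI[of _ _ 1]) (simp_all add: rel_norm_one)

lemma minus_one_in_rel_norm_image: "- 1 \<in> rel_norm q ` (- {0 :: 'a::field})"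
  by (rule image_eqI[of _ _ "- 1"]) (simp_all add: rel_norm_uminus rel_norm_one)

lemma rel_norm_eq_prod: "rel_norm q x = x * x ^ q * x ^ (q ^ 2)"
  unfolding rel_norm_def by (simp add: power_add ac_simps)

section \<open>Homogeneous coordinates\<close>

lemma pclass_mem_iff:
  "(a, b, c) \<in> pclass (x, y, z) \<longleftrightarrow> (\<exists>k. k \<noteq> 0 \<and> a = k * x \<and> b = k * y \<and> c = k * z)"
  by (auto simp: pclass_def)

lemma pclass_self: "(x, y, z) \<in> pclass (x, y, z)"
  unfolding pclass_mem_iff by (intro exI[of _ 1]) simp

lemma pclass_scale:
  assumes "(k :: 'a::field) \<noteq> 0"
  shows "pclass (k * x, k * y, k * z) = pclass (x, y, z)"
proof (intro Set.set_eqI iffI)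
  fix w
  assume "w \<in> pclass (k * x, k * y, k * z)"
  then obtain c where "c \<noteq> 0" "w = (c * (k * x), c * (k * y), c * (k * z))"
    by (auto simp: pclass_def)
  then show "w \<in> pclass (x, y, z)"
    using assms unfolding pclass_def by (auto intro!: exI[of _ "c * k"])
next
  fix w
  assume "w \<in> pclass (x, y, z)"
  then obtain c where "c \<noteq> 0" "w = (c * x, c * y, c * z)"
    by (auto simp: pclass_def)
  then show "w \<in> pclass (k * x, k * y, k * z)"
    using assms unfolding pclass_def by (auto intro!: exI[of _ "c / k"])
qed

lemma pclass_eq_iff:
  "pclass (x, y, z) = pclass (a, b, c) \<longleftrightarrow>
    (\<exists>k :: 'a::field. k \<noteq> 0 \<and> a = k * x \<and> b = k * y \<and> c = k * z)"
proof
  assume "pclass (x, y, z) = pclass (a, b, c)"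
  then have "(a, b, c) \<in> pclass (x, y, z)"
    using pclass_self by metis
  then show "\<exists>k. k \<noteq> 0 \<and> a = k * x \<and> b = k * y \<and> c = k * z"
    by (simp add: pclass_mem_iff)
qed (metis pclass_scale)

lemma incident_pclass_iff:
  "incident (pclass (x, y, z)) (pclass (a, b, c)) \<longleftrightarrow> a * x + b * y + c * (z :: 'a::field) = 0"
proof
  assume "incident (pclass (x, y, z)) (pclass (a, b, c))"
  then obtain k m where "k \<noteq> 0" "m \<noteq> 0"
    and "(m * a) * (k * x) + (m * b) * (k * y) + (m * c) * (k * z) = 0"
    unfolding incident_def pclass_def by auto
  moreover have "(m * a) * (k * x) + (m * b) * (k * y) + (m * c) * (k * z)
      = (m * k) * (a * x + b * y + c * z)"
    by (simp add: algebra_simps)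
  ultimately show "a * x + b * y + c * z = 0"
    by simp
qed (unfold incident_def, use pclass_self in blast)

lemma is_pelem_iff: "is_pelem P \<longleftrightarrow> (\<exists>x y z. (x, y, z) \<noteq> (0, 0, 0) \<and> P = pclass (x, y, z))"
  unfolding is_pelem_def by auto

lemma is_pelem_pclass: "(x, y, z) \<noteq> (0, 0, 0) \<Longrightarrow> is_pelem (pclass (x, y, z))"
  unfolding is_pelem_def by blast

lemma collinear_pts_pclass_iff:
  "collinear_pts (pclass ` V) \<longleftrightarrow>
    (\<exists>a b c :: 'a::field. (a, b, c) \<noteq> (0, 0, 0) \<and> (\<forall>(x, y, z) \<in> V. a * x + b * y + c * z = 0))"
proof -
  have "collinear_pts (pclass ` V) \<longleftrightarrow>
      (\<exists>a b c. (a, b, c) \<noteq> (0, 0, 0) \<and> (\<forall>v \<in> V. incident (pclass v) (pclass (a, b, c))))"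
    unfolding collinear_pts_def is_pelem_iff by blast
  then show ?thesis
    by (simp add: Ball_def split_paired_All incident_pclass_iff)
qed

lemma concurrent_lines_pclass_iff:
  "concurrent_lines (pclass ` V) \<longleftrightarrow>
    (\<exists>x y z :: 'a::field. (x, y, z) \<noteq> (0, 0, 0) \<and> (\<forall>(a, b, c) \<in> V. a * x + b * y + c * z = 0))"
proof -
  have "concurrent_lines (pclass ` V) \<longleftrightarrow>
      (\<exists>x y z. (x, y, z) \<noteq> (0, 0, 0) \<and> (\<forall>v \<in> V. incident (pclass (x, y, z)) (pclass v)))"
    unfolding concurrent_lines_def is_pelem_iff by blast
  then show ?thesis
    by (simp add: Ball_def split_paired_All incident_pclass_iff)
qed

lemma three_cycle_solvable_iff:
  "(\<exists>a b c :: 'a::field. (a, b, c) \<noteq> (0, 0, 0) \<and> a * u + b = 0 \<and> b * v + c = 0 \<and> c * w + a = 0)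
    \<longleftrightarrow> u * v * w = - 1"
proof
  assume "\<exists>a b c. (a, b, c) \<noteq> (0, 0, 0) \<and> a * u + b = 0 \<and> b * v + c = 0 \<and> c * w + a = 0"
  then obtain a b c where nz: "(a, b, c) \<noteq> (0, 0, 0)"
    and eqs: "a * u + b = 0" "b * v + c = 0" "c * w + a = 0"
    by blast
  have b: "b = - (a * u)"
    using eqs(1) by (simp add: eq_neg_iff_add_eq_0 add.commute)
  have c: "c = a * u * v"
    using eqs(2) b by (simp add: eq_neg_iff_add_eq_0 algebra_simps)
  have "a \<noteq> 0"
    using nz b c by auto
  moreover have "a * (1 + u * v * w) = 0"
    using eqs(3) c by (simp add: algebra_simps)
  ultimately show "u * v * w = - 1"
    by (simp add: eq_neg_iff_add_eq_0 add.commute)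
next
  assume "u * v * w = - 1"
  then show "\<exists>a b c. (a, b, c) \<noteq> (0, 0, 0) \<and> a * u + b = 0 \<and> b * v + c = 0 \<and> c * w + a = 0"
    by (intro exI[of _ 1] exI[of _ "- u"] exI[of _ "u * v"]) (simp add: algebra_simps)
qed

lemma psi_pclass:
  "(t :: 'a::field) \<noteq> 0 \<Longrightarrow> psi_v q t ` pclass (x, y, z) = pclass (t * x, t ^ q * y, t ^ (q ^ 2) * z)"
  unfolding pclass_def psi_v_def by (auto simp: algebra_simps image_def)

lemma phi_pclass:
  assumes "surj (\<lambda>k :: 'a::field. k ^ q)"
  shows "phi q (pclass (x, y, z)) = pclass (z ^ q, x ^ q, (y :: 'a) ^ q)"
proof (intro Set.set_eqI iffI)
  fix w
  assume "w \<in> phi q (pclass (x, y, z))"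
  then obtain k where "k \<noteq> 0" "w = phi_v q (k * x, k * y, k * z)"
    unfolding phi_def pclass_def by auto
  then have "k ^ q \<noteq> 0" and w: "w = (k ^ q * z ^ q, k ^ q * x ^ q, k ^ q * y ^ q)"
    by (simp_all add: phi_v_def power_mult_distrib)
  then show "w \<in> pclass (z ^ q, x ^ q, y ^ q)"
    unfolding w pclass_mem_iff by blast
next
  fix w
  assume "w \<in> pclass (z ^ q, x ^ q, y ^ q)"
  then obtain k where k: "k \<noteq> 0" "w = (k * z ^ q, k * x ^ q, k * y ^ q)"
    unfolding pclass_def by auto
  have "q \<noteq> 0"
    using surjD[OF assms, of 0] by (metis power_0 zero_neq_one)
  obtain c where c: "k = c ^ q"
    using assms by (metis surjD)
  then have "c \<noteq> 0"
    using k \<open>q \<noteq> 0\<close> by auto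
  then have "(c * x, c * y, c * z) \<in> pclass (x, y, z)"
    by (auto simp: pclass_mem_iff)
  moreover have "w = phi_v q (c * x, c * y, c * z)"
    using k c by (simp add: phi_v_def power_mult_distrib)
  ultimately show "w \<in> phi q (pclass (x, y, z))"
    unfolding phi_def by blast
qed

lemma ST_orbit_eq_image: "ST_orbit q P = (\<lambda>t. psi_v q t ` P) ` (- {0})"
  unfolding ST_orbit_def by blast

lemma ST_orbit_self: "P \<in> ST_orbit q P"
proof -
  have "psi_v q 1 ` P = P"
    by (simp add: psi_v_def case_prod_beta)
  then show ?thesis
    unfolding ST_orbit_eq_image by (intro image_eqI[of _ _ 1]) simp_all
qed

section \<open>The points of m_T and the lines through T\<close>

(* mT_point theta = (theta, 1, 0) runs over the points of m_T other than T^phi = (1, 0, 0), and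
   T_line theta = [1, -theta, 0] is the line joining it to T. *)
definition mT_point :: "'a::field \<Rightarrow> 'a vec3 set" where
  "mT_point \<theta> = pclass (\<theta>, 1, 0)"

definition T_line :: "'a::field \<Rightarrow> 'a vec3 set" where
  "T_line \<theta> = pclass (1, - \<theta>, 0)"

lemma mT_point_eq_iff: "mT_point \<theta> = mT_point \<eta> \<longleftrightarrow> \<theta> = \<eta>"
  unfolding mT_point_def pclass_eq_iff by auto

lemma T_line_eq_iff: "T_line \<theta> = T_line \<eta> \<longleftrightarrow> \<theta> = \<eta>"
  unfolding T_line_def pclass_eq_iff by auto

lemma is_pelem_mT_point: "is_pelem (mT_point \<theta>)"
  unfolding mT_point_def by (rule is_pelem_pclass) simp

lemma incident_mT_point_lineMT: "incident (mT_point \<theta>) lineMT"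
  unfolding mT_point_def lineMT_def by (simp add: incident_pclass_iff)

lemma point_on_mT_cases:
  assumes "is_pelem P" "incident P lineMT"
  shows "P = pclass (1, 0, 0) \<or> (\<exists>\<theta>. P = mT_point \<theta>)"
proof -
  obtain x y z where nz: "(x, y, z) \<noteq> (0, 0, 0)" and P: "P = pclass (x, y, z)"
    using assms(1) unfolding is_pelem_iff by blast
  have "z = 0"
    using assms(2) unfolding P lineMT_def by (simp add: incident_pclass_iff)
  show ?thesis
  proof (cases "y = 0")
    case True
    then have "P = pclass (x * 1, x * 0, x * 0)"
      using P \<open>z = 0\<close> by simp
    then show ?thesis
      using nz True \<open>z = 0\<close> pclass_scale[of x 1 0 0] by auto
  next
    case False
    then have "P = pclass (y * (x / y), y * 1, y * 0)"
      using P \<open>z = 0\<close> by simp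
    then show ?thesis
      using False pclass_scale[of y "x / y" 1 0] unfolding mT_point_def by auto
  qed
qed

lemma sls_pencil_mT_points: "sls_pencil (mT_point ` C) = T_line ` C"
proof (intro Set.set_eqI iffI)
  fix L
  assume "L \<in> sls_pencil (mT_point ` C)"
  then obtain \<theta> where L: "is_pelem L" "incident ptT L" and "\<theta> \<in> C" "incident (mT_point \<theta>) L"
    unfolding sls_pencil_def by auto
  moreover obtain a b c where nz: "(a, b, c) \<noteq> (0, 0, 0)" and L_eq: "L = pclass (a, b, c)"
    using L(1) unfolding is_pelem_iff by blast
  ultimately have "c = 0" "b = - (a * \<theta>)"
    unfolding ptT_def mT_point_def
    by (simp_all add: incident_pclass_iff eq_neg_iff_add_eq_0 add.commute)
  then have "L = T_line \<theta>"
    using nz pclass_scale[of a 1 "- \<theta>" 0] unfolding L_eq T_line_def by auto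
  then show "L \<in> T_line ` C"
    using \<open>\<theta> \<in> C\<close> by blast
next
  fix L
  assume "L \<in> T_line ` C"
  then obtain \<theta> where "\<theta> \<in> C" "L = T_line \<theta>"
    by blast
  moreover have "is_pelem (T_line \<theta>)"
    unfolding T_line_def by (rule is_pelem_pclass) simp
  ultimately show "L \<in> sls_pencil (mT_point ` C)"
    unfolding sls_pencil_def ptT_def T_line_def mT_point_def by (auto simp: incident_pclass_iff)
qed

lemma meet_mT_T_lines: "meet_mT (T_line ` C) = mT_point ` C"
proof (intro Set.set_eqI iffI)
  fix X
  assume "X \<in> meet_mT (T_line ` C)"
  then obtain \<theta> where X: "is_pelem X" "incident X lineMT" and "\<theta> \<in> C" "incident X (T_line \<theta>)"
    unfolding meet_mT_def by auto
  moreover obtain x y z where nz: "(x, y, z) \<noteq> (0, 0, 0)" and X_eq: "X = pclass (x, y, z)"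
    using X(1) unfolding is_pelem_iff by blast
  ultimately have "z = 0" "x = \<theta> * y"
    unfolding lineMT_def T_line_def by (simp_all add: incident_pclass_iff)
  then have "X = mT_point \<theta>"
    using nz pclass_scale[of y \<theta> 1 0] unfolding X_eq mT_point_def by (auto simp: mult.commute)
  then show "X \<in> mT_point ` C"
    using \<open>\<theta> \<in> C\<close> by blast
next
  fix X
  assume "X \<in> mT_point ` C"
  then show "X \<in> meet_mT (T_line ` C)"
    unfolding meet_mT_def using is_pelem_mT_point incident_mT_point_lineMT
    by (auto simp: T_line_def mT_point_def incident_pclass_iff)
qed

lemma phi_orbit_mT_point:
  fixes \<theta> :: "'a::field"
  assumes "surj (\<lambda>k :: 'a. k ^ q)" "q > 0"
  shows "phi_orbit q (mT_point \<theta>) = pclass ` {(\<theta>, 1, 0), (0, \<theta> ^ q, 1), (1, 0, \<theta> ^ (q ^ 2))}"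
proof -
  have "phi q (pclass (\<theta>, 1, 0)) = pclass (0, \<theta> ^ q, 1)"
    using phi_pclass[OF assms(1), of \<theta> 1 0] assms(2) by (simp add: power_0_left)
  moreover have "phi q (pclass (0, \<theta> ^ q, 1)) = pclass (1, 0, \<theta> ^ (q ^ 2))"
    using phi_pclass[OF assms(1), of 0 "\<theta> ^ q" 1] assms(2)
    by (simp add: power_0_left power_mult[symmetric] power2_eq_square)
  ultimately show ?thesis
    by (simp add: phi_orbit_def mT_point_def)
qed

lemma phi_orbit_T_line:
  fixes \<theta> :: "'a::field"
  assumes "surj (\<lambda>k :: 'a. k ^ q)" "q > 0"
  shows "phi_orbit q (T_line \<theta>) =
    pclass ` {(1, - \<theta>, 0), (0, 1, (- \<theta>) ^ q), ((- \<theta>) ^ (q ^ 2), 0, 1)}"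
proof -
  have "phi q (pclass (1, - \<theta>, 0)) = pclass (0, 1, (- \<theta>) ^ q)"
    using phi_pclass[OF assms(1), of 1 "- \<theta>" 0] assms(2) by (simp add: power_0_left)
  moreover have "phi q (pclass (0, 1, (- \<theta>) ^ q)) = pclass ((- \<theta>) ^ (q ^ 2), 0, 1)"
    using phi_pclass[OF assms(1), of 0 1 "(- \<theta>) ^ q"] assms(2)
    by (simp add: power_0_left power_mult[symmetric] power2_eq_square)
  ultimately show ?thesis
    by (simp add: phi_orbit_def T_line_def)
qed

lemma card_phi_orbit_mT_point:
  fixes \<theta> :: "'a::field"
  assumes "surj (\<lambda>k :: 'a. k ^ q)" "q > 0"
  shows "card (phi_orbit q (mT_point \<theta>)) = 3"
  unfolding phi_orbit_mT_point[OF assms] by (auto simp: pclass_eq_iff card_insert_if)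

lemma card_phi_orbit_T_line:
  fixes \<theta> :: "'a::field"
  assumes "surj (\<lambda>k :: 'a. k ^ q)" "q > 0"
  shows "card (phi_orbit q (T_line \<theta>)) = 3"
  unfolding phi_orbit_T_line[OF assms] by (auto simp: pclass_eq_iff card_insert_if)

lemma collinear_phi_orbit_mT_point_iff:
  fixes \<theta> :: "'a::field"
  assumes "surj (\<lambda>k :: 'a. k ^ q)" "q > 0"
  shows "collinear_pts (phi_orbit q (mT_point \<theta>)) \<longleftrightarrow> rel_norm q \<theta> = - 1"
proof -
  have "collinear_pts (phi_orbit q (mT_point \<theta>)) \<longleftrightarrow>
      (\<exists>a b c. (a, b, c) \<noteq> (0, 0, 0) \<and> a * \<theta> + b = 0 \<and> b * \<theta> ^ q + c = 0 \<and> c * \<theta> ^ (q ^ 2) + a = 0)"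
    unfolding phi_orbit_mT_point[OF assms] collinear_pts_pclass_iff by (simp add: ac_simps)
  also have "\<dots> \<longleftrightarrow> \<theta> * \<theta> ^ q * \<theta> ^ (q ^ 2) = - 1"
    by (rule three_cycle_solvable_iff)
  finally show ?thesis
    by (simp add: rel_norm_eq_prod)
qed

lemma concurrent_phi_orbit_T_line_iff:
  fixes \<theta> :: "'a::field"
  assumes "surj (\<lambda>k :: 'a. k ^ q)" "q > 0"
  shows "concurrent_lines (phi_orbit q (T_line \<theta>)) \<longleftrightarrow> rel_norm q \<theta> = 1"
proof -
  define u where "u = - \<theta>"
  have "concurrent_lines (phi_orbit q (T_line \<theta>)) \<longleftrightarrow>
      (\<exists>x y z. (x, y, z) \<noteq> (0, 0, 0) \<and> y * u + x = 0 \<and> x * u ^ (q ^ 2) + z = 0 \<and> z * u ^ q + y = 0)"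
    unfolding phi_orbit_T_line[OF assms] concurrent_lines_pclass_iff by (simp add: u_def ac_simps)
  also have "\<dots> \<longleftrightarrow>
      (\<exists>a b c. (a, b, c) \<noteq> (0, 0, 0) \<and> a * u + b = 0 \<and> b * u ^ (q ^ 2) + c = 0 \<and> c * u ^ q + a = 0)"
    by auto
  also have "\<dots> \<longleftrightarrow> u * u ^ (q ^ 2) * u ^ q = - 1"
    by (rule three_cycle_solvable_iff)
  also have "\<dots> \<longleftrightarrow> rel_norm q u = - 1"
    by (simp add: rel_norm_eq_prod ac_simps)
  finally show ?thesis
    by (simp add: u_def rel_norm_uminus)
qed

lemma pt_type2_mT_point_iff:
  fixes \<theta> :: "'a::field"
  assumes "surj (\<lambda>k :: 'a. k ^ q)" "q > 0"
  shows "pt_type2 q (mT_point \<theta>) \<longleftrightarrow> rel_norm q \<theta> = - 1"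
  using card_phi_orbit_mT_point[OF assms] collinear_phi_orbit_mT_point_iff[OF assms]
  by (simp add: pt_type2_def)

lemma pt_type3_mT_point_iff:
  fixes \<theta> :: "'a::field"
  assumes "surj (\<lambda>k :: 'a. k ^ q)" "q > 0"
  shows "pt_type3 q (mT_point \<theta>) \<longleftrightarrow> rel_norm q \<theta> \<noteq> - 1"
  using card_phi_orbit_mT_point[OF assms] collinear_phi_orbit_mT_point_iff[OF assms]
  by (simp add: pt_type3_def)

lemma line_type2_T_line_iff:
  fixes \<theta> :: "'a::field"
  assumes "surj (\<lambda>k :: 'a. k ^ q)" "q > 0"
  shows "line_type2 q (T_line \<theta>) \<longleftrightarrow> rel_norm q \<theta> = 1"
  using card_phi_orbit_T_line[OF assms] concurrent_phi_orbit_T_line_iff[OF assms]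
  by (simp add: line_type2_def)

lemma line_type3_T_line_iff:
  fixes \<theta> :: "'a::field"
  assumes "surj (\<lambda>k :: 'a. k ^ q)" "q > 0"
  shows "line_type3 q (T_line \<theta>) \<longleftrightarrow> rel_norm q \<theta> \<noteq> 1"
  using card_phi_orbit_T_line[OF assms] concurrent_phi_orbit_T_line_iff[OF assms]
  by (simp add: line_type3_def)

lemma psi_mT_point:
  assumes "t \<noteq> 0"
  shows "psi_v q t ` mT_point \<theta> = mT_point (\<theta> * (t / t ^ q))"
proof -
  have "psi_v q t ` mT_point \<theta> = pclass (t ^ q * (\<theta> * (t / t ^ q)), t ^ q * 1, t ^ q * 0)"
    using assms by (simp add: mT_point_def psi_pclass ac_simps)
  also have "\<dots> = mT_point (\<theta> * (t / t ^ q))"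
    unfolding mT_point_def using assms by (intro pclass_scale) simp
  finally show ?thesis .
qed

lemma ST_orbit_eq_singleton:
  assumes "\<And>t. t \<noteq> 0 \<Longrightarrow> psi_v q t ` P = P"
  shows "ST_orbit q P = {P}"
proof -
  have "ST_orbit q P = (\<lambda>t :: 'a. P) ` (- {0})"
    unfolding ST_orbit_eq_image by (rule image_cong) (simp_all add: assms)
  also have "\<dots> = {P}"
    by (rule image_constant[of 1]) simp
  finally show ?thesis .
qed

lemma ST_orbit_pclass_100: "ST_orbit q (pclass (1, 0, 0 :: 'a::field)) = {pclass (1, 0, 0)}"
proof (rule ST_orbit_eq_singleton)
  fix t :: 'a
  assume "t \<noteq> 0"
  then show "psi_v q t ` pclass (1, 0, 0) = pclass (1, 0, 0)"
    using pclass_scale[of t 1 0 0] by (simp add: psi_pclass)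
qed

section \<open>T-slses and their pencils\<close>

lemma ball_image_fibre_iff:
  assumes "c \<in> f ` A" "\<And>x. P (g x) \<longleftrightarrow> Q (f x)"
  shows "(\<forall>y \<in> g ` {x. f x = c}. P y) \<longleftrightarrow> Q c"
  using assms by auto

lemma inj_on_image_fibres:
  assumes "inj g"
  shows "inj_on (\<lambda>c. g ` {x. f x = c}) (f ` A)"
proof (rule inj_onI)
  fix c c'
  assume "c \<in> f ` A" "c' \<in> f ` A" and eq: "g ` {x. f x = c} = g ` {x. f x = c'}"
  then obtain a where "f a = c"
    by blast
  then have "g a \<in> g ` {x. f x = c'}"
    using eq by blast
  then show "c = c'"
    using \<open>f a = c\<close> assms by (auto dest: injD)
qed

lemma card_filter_image:
  assumes "inj_on F A"
  shows "card {y \<in> F ` A. P y} = card {a \<in> A. P (F a)}"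
proof -
  have "{y \<in> F ` A. P y} = F ` {a \<in> A. P (F a)}"
    by auto
  moreover have "inj_on F {a \<in> A. P (F a)}"
    using assms by (rule inj_on_subset) auto
  ultimately show ?thesis
    by (simp add: card_image)
qed

definition norm_pencil :: "nat \<Rightarrow> 'a::field \<Rightarrow> 'a vec3 set set" where
  "norm_pencil q c = T_line ` {x. rel_norm q x = c}"

context
  fixes q :: nat
  assumes card_field: "card (UNIV :: 'a::{field,finite} set) = q ^ 3"
begin

lemma q_ge_2: "2 \<le> q"
proof (rule ccontr)
  assume "\<not> 2 \<le> q"
  then have "q = 0 \<or> q = 1"
    by linarith
  then have "q ^ 3 \<le> 1"
    by auto
  then show False
    using finite_field_card_ge_2[where 'a = 'a] card_field by simp
qed

lemma card_units_factor:
  "(q - 1) * (q ^ 2 + q + 1) = card (UNIV :: 'a set) - 1"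
  "(q ^ 2 + q + 1) * (q - 1) = card (UNIV :: 'a set) - 1"
proof -
  obtain k where "q = Suc k"
    using q_ge_2 by (cases q) auto
  then show "(q - 1) * (q ^ 2 + q + 1) = card (UNIV :: 'a set) - 1"
    using card_field by (simp add: algebra_simps power2_eq_square power3_eq_cube)
  then show "(q ^ 2 + q + 1) * (q - 1) = card (UNIV :: 'a set) - 1"
    by (simp add: mult.commute)
qed

lemma surj_frobenius: "surj (\<lambda>x :: 'a. x ^ q)"
proof (rule surjI)
  fix x :: 'a
  show "(x ^ (q ^ 2)) ^ q = x"
    using finite_field_power_card[of x] card_field
    by (simp add: power_mult[symmetric] power2_eq_square power3_eq_cube)
qed

lemma card_rel_norm_image: "card (rel_norm q ` (- {0 :: 'a})) = q - 1"
proof -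
  have "rel_norm q ` (- {0 :: 'a}) = {u. u ^ (q - 1) = 1}"
    unfolding rel_norm_def[abs_def] by (rule roots_of_unity_eq_powers(2)[OF card_units_factor(2)])
  then show ?thesis
    using roots_of_unity_eq_powers(1)[OF card_units_factor(1)] by simp
qed

lemma card_rel_norm_fibre:
  assumes "\<theta> \<noteq> 0"
  shows "card {x :: 'a. rel_norm q x = rel_norm q \<theta>} = q ^ 2 + q + 1"
proof -
  have "card {x :: 'a. rel_norm q x = rel_norm q \<theta>} = card {u :: 'a. u ^ (q ^ 2 + q + 1) = 1}"
    unfolding rel_norm_def by (rule card_power_fibre[OF assms])
  also have "\<dots> = q ^ 2 + q + 1"
    by (rule roots_of_unity_eq_powers(1)[OF card_units_factor(2)])
  finally show ?thesis .
qed

(* Hilbert's Theorem 90 for the cyclic extension of degree 3. *)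
lemma rel_norm_eq_1_image: "(\<lambda>t. t / t ^ q) ` (- {0}) = {u :: 'a. rel_norm q u = 1}"
proof -
  have quotient: "t / t ^ q = inverse t ^ (q - 1)" if "t \<noteq> 0" for t :: 'a
  proof -
    obtain k where "q = Suc k"
      using q_ge_2 by (cases q) auto
    then show ?thesis
      using that by (simp add: power_inverse inverse_eq_divide power_one_over)
  qed
  have "(\<lambda>t :: 'a. t / t ^ q) ` (- {0}) = (\<lambda>a. a ^ (q - 1)) ` (- {0})"
  proof (intro Set.set_eqI iffI)
    fix u :: 'a
    assume "u \<in> (\<lambda>t. t / t ^ q) ` (- {0})"
    then obtain t where "t \<noteq> 0" "u = t / t ^ q"
      by auto
    then show "u \<in> (\<lambda>a. a ^ (q - 1)) ` (- {0})"
      using quotient by (intro image_eqI[of _ _ "inverse t"]) simp_all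
  next
    fix u :: 'a
    assume "u \<in> (\<lambda>a. a ^ (q - 1)) ` (- {0})"
    then obtain a where "a \<noteq> 0" "u = a ^ (q - 1)"
      by auto
    then show "u \<in> (\<lambda>t. t / t ^ q) ` (- {0})"
      using quotient[of "inverse a"] by (intro image_eqI[of _ _ "inverse a"]) simp_all
  qed
  also have "\<dots> = {u. rel_norm q u = 1}"
    unfolding rel_norm_def by (rule roots_of_unity_eq_powers(2)[OF card_units_factor(1)])
  finally show ?thesis .
qed

lemma ST_orbit_mT_point:
  "ST_orbit q (mT_point \<theta>) = (\<lambda>u. mT_point (\<theta> * u)) ` {u :: 'a. rel_norm q u = 1}"
proof -
  have "ST_orbit q (mT_point \<theta>) = (\<lambda>t. mT_point (\<theta> * (t / t ^ q))) ` (- {0})"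
    unfolding ST_orbit_eq_image by (rule image_cong) (simp_all add: psi_mT_point)
  also have "\<dots> = (\<lambda>u. mT_point (\<theta> * u)) ` (\<lambda>t. t / t ^ q) ` (- {0})"
    by (simp only: image_image)
  also have "\<dots> = (\<lambda>u. mT_point (\<theta> * u)) ` {u. rel_norm q u = 1}"
    by (simp only: rel_norm_eq_1_image)
  finally show ?thesis .
qed

lemma ST_orbit_mT_point_nonzero:
  assumes "\<theta> \<noteq> 0"
  shows "ST_orbit q (mT_point \<theta>) = mT_point ` {x :: 'a. rel_norm q x = rel_norm q \<theta>}"
proof -
  have "ST_orbit q (mT_point \<theta>) = mT_point ` (\<lambda>u. \<theta> * u) ` {u. rel_norm q u = 1}"
    unfolding ST_orbit_mT_point by (simp only: image_image)
  also have "\<dots> = mT_point ` {x :: 'a. rel_norm q x = rel_norm q \<theta>}"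
    by (simp only: rel_norm_def power_fibre_eq[OF assms])
  finally show ?thesis .
qed

lemma ST_orbit_mT_point_zero: "ST_orbit q (mT_point (0 :: 'a)) = {mT_point 0}"
proof -
  have "{u :: 'a. rel_norm q u = 1} \<noteq> {}"
    using rel_norm_one by blast
  then show ?thesis
    unfolding ST_orbit_mT_point by (simp add: image_constant_conv)
qed

lemma T_sls_eq_norm_fibre:
  assumes "Ob \<in> T_slses q"
  obtains \<theta> :: 'a where "\<theta> \<noteq> 0" "Ob = mT_point ` {x. rel_norm q x = rel_norm q \<theta>}"
proof -
  obtain P where P: "is_pelem P" and Ob: "Ob = ST_orbit q P"
    and card: "card Ob = q ^ 2 + q + 1" and on_mT: "\<forall>X\<in>Ob. incident X lineMT"
    using assms unfolding T_slses_def by blast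
  have "card Ob \<noteq> 1"
    using card q_ge_2 by simp
  have "incident P lineMT"
    using on_mT ST_orbit_self Ob by blast
  then consider "P = pclass (1, 0, 0)" | \<theta> where "P = mT_point \<theta>"
    using point_on_mT_cases P by blast
  then show thesis
  proof cases
    case 1
    then show ?thesis
      using \<open>card Ob \<noteq> 1\<close> Ob ST_orbit_pclass_100[where 'a = 'a] by simp
  next
    case (2 \<theta>)
    then have "\<theta> \<noteq> 0"
      using \<open>card Ob \<noteq> 1\<close> Ob ST_orbit_mT_point_zero by auto
    then show ?thesis
      using 2 Ob ST_orbit_mT_point_nonzero that by blast
  qed
qed

lemma norm_fibre_in_T_slses:
  assumes "\<theta> \<noteq> 0"
  shows "mT_point ` {x :: 'a. rel_norm q x = rel_norm q \<theta>} \<in> T_slses q"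
proof -
  let ?Ob = "mT_point ` {x :: 'a. rel_norm q x = rel_norm q \<theta>}"
  have "inj_on mT_point {x :: 'a. rel_norm q x = rel_norm q \<theta>}"
    by (simp add: inj_on_def mT_point_eq_iff)
  then have "card ?Ob = q ^ 2 + q + 1"
    using card_rel_norm_fibre[OF assms] by (simp add: card_image)
  moreover have "?Ob = ST_orbit q (mT_point \<theta>)"
    using ST_orbit_mT_point_nonzero[OF assms] by simp
  moreover have "\<forall>X\<in>?Ob. incident X lineMT"
    using incident_mT_point_lineMT by blast
  ultimately show ?thesis
    unfolding T_slses_def using is_pelem_mT_point by blast
qed

lemma T_slses_eq: "T_slses q = (\<lambda>c. mT_point ` {x :: 'a. rel_norm q x = c}) ` rel_norm q ` (- {0})"
proof (intro Set.set_eqI iffI)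
  fix Ob :: "'a vec3 set set"
  assume "Ob \<in> T_slses q"
  then obtain \<theta> :: 'a where "\<theta> \<noteq> 0" "Ob = mT_point ` {x. rel_norm q x = rel_norm q \<theta>}"
    by (rule T_sls_eq_norm_fibre)
  then show "Ob \<in> (\<lambda>c. mT_point ` {x. rel_norm q x = c}) ` rel_norm q ` (- {0})"
    by blast
next
  fix Ob
  assume "Ob \<in> (\<lambda>c. mT_point ` {x. rel_norm q x = c}) ` rel_norm q ` (- {0 :: 'a})"
  then show "Ob \<in> T_slses q"
    using norm_fibre_in_T_slses by blast
qed

lemma T_sls_pencils_eq: "sls_pencil ` T_slses q = norm_pencil q ` rel_norm q ` (- {0 :: 'a})"
  by (simp add: T_slses_eq image_image sls_pencil_mT_points norm_pencil_def)

lemma card_filter_T_sls_pencils: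
  "card {Pc \<in> sls_pencil ` T_slses q. P Pc} =
    card {c \<in> rel_norm q ` (- {0 :: 'a}). P (norm_pencil q c)}"
  unfolding T_sls_pencils_eq norm_pencil_def
  by (intro card_filter_image inj_on_image_fibres) (simp add: inj_def T_line_eq_iff)

lemma norm_pencil_types:
  assumes "c \<in> rel_norm q ` (- {0 :: 'a})"
  shows "(\<forall>L \<in> norm_pencil q c. line_type2 q L) \<longleftrightarrow> c = 1"
    and "(\<forall>L \<in> norm_pencil q c. line_type3 q L) \<longleftrightarrow> c \<noteq> 1"
    and "(\<forall>X \<in> meet_mT (norm_pencil q c). pt_type2 q X) \<longleftrightarrow> c = - 1"
    and "(\<forall>X \<in> meet_mT (norm_pencil q c). pt_type3 q X) \<longleftrightarrow> c \<noteq> - 1"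
proof -
  have frob: "surj (\<lambda>x :: 'a. x ^ q)" "q > 0"
    using surj_frobenius q_ge_2 by simp_all
  show "(\<forall>L \<in> norm_pencil q c. line_type2 q L) \<longleftrightarrow> c = 1"
    unfolding norm_pencil_def
    by (rule ball_image_fibre_iff[OF assms, where Q = "\<lambda>c. c = 1"])
      (rule line_type2_T_line_iff[OF frob])
  show "(\<forall>L \<in> norm_pencil q c. line_type3 q L) \<longleftrightarrow> c \<noteq> 1"
    unfolding norm_pencil_def
    by (rule ball_image_fibre_iff[OF assms, where Q = "\<lambda>c. c \<noteq> 1"])
      (rule line_type3_T_line_iff[OF frob])
  show "(\<forall>X \<in> meet_mT (norm_pencil q c). pt_type2 q X) \<longleftrightarrow> c = - 1"
    unfolding norm_pencil_def meet_mT_T_lines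
    by (rule ball_image_fibre_iff[OF assms, where Q = "\<lambda>c. c = - 1"])
      (rule pt_type2_mT_point_iff[OF frob])
  show "(\<forall>X \<in> meet_mT (norm_pencil q c). pt_type3 q X) \<longleftrightarrow> c \<noteq> - 1"
    unfolding norm_pencil_def meet_mT_T_lines
    by (rule ball_image_fibre_iff[OF assms, where Q = "\<lambda>c. c \<noteq> - 1"])
      (rule pt_type3_mT_point_iff[OF frob])
qed

lemma minus_one_eq_one_iff_even: "(- 1 :: 'a) = 1 \<longleftrightarrow> even q"
  using finite_field_minus_one_eq_one_iff[where 'a = 'a] card_field by simp

lemma card_T_sls_pencils: "card (sls_pencil ` (T_slses q :: 'a vec3 set set set)) = q - 1"
  using card_filter_T_sls_pencils[of "\<lambda>_. True"] card_rel_norm_image by simp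

lemma card_type2_T_sls_pencils:
  "card {Pc \<in> sls_pencil ` (T_slses q :: 'a vec3 set set set). \<forall>L\<in>Pc. line_type2 q L} = 1"
proof -
  have "{c \<in> rel_norm q ` (- {0 :: 'a}). \<forall>L\<in>norm_pencil q c. line_type2 q L} = {1}"
    using one_in_rel_norm_image[where 'a = 'a] by (auto simp: norm_pencil_types cong: conj_cong)
  then show ?thesis
    by (simp add: card_filter_T_sls_pencils)
qed

lemma card_type3_T_sls_pencils:
  "card {Pc \<in> sls_pencil ` (T_slses q :: 'a vec3 set set set). \<forall>L\<in>Pc. line_type3 q L} = q - 2"
proof -
  have "{c \<in> rel_norm q ` (- {0 :: 'a}). \<forall>L\<in>norm_pencil q c. line_type3 q L} =
      rel_norm q ` (- {0}) - {1}"
    by (auto simp: norm_pencil_types cong: conj_cong)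
  then show ?thesis
    using one_in_rel_norm_image[where 'a = 'a] card_rel_norm_image
    by (simp add: card_filter_T_sls_pencils card_Diff_singleton)
qed

lemma type2_T_sls_pencil_meets_mT:
  assumes "Pc \<in> sls_pencil ` (T_slses q :: 'a vec3 set set set)" and "\<forall>L\<in>Pc. line_type2 q L"
  shows "even q \<Longrightarrow> \<forall>X\<in>meet_mT Pc. pt_type2 q X"
    and "odd q \<Longrightarrow> \<forall>X\<in>meet_mT Pc. pt_type3 q X"
proof -
  obtain c where c: "c \<in> rel_norm q ` (- {0 :: 'a})" "Pc = norm_pencil q c"
    using assms(1) unfolding T_sls_pencils_eq by blast
  then have "c = 1"
    using assms(2) norm_pencil_types(1)[OF c(1)] by simp
  show "even q \<Longrightarrow> \<forall>X\<in>meet_mT Pc. pt_type2 q X"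
    using \<open>c = 1\<close> c norm_pencil_types(3)[OF c(1)] minus_one_eq_one_iff_even by simp
  show "odd q \<Longrightarrow> \<forall>X\<in>meet_mT Pc. pt_type3 q X"
    using \<open>c = 1\<close> c norm_pencil_types(4)[OF c(1)] minus_one_eq_one_iff_even by simp
qed

lemma type3_T_sls_pencil_meets_mT:
  assumes "Pc \<in> sls_pencil ` (T_slses q :: 'a vec3 set set set)" and "\<forall>L\<in>Pc. line_type3 q L"
    and "even q"
  shows "\<forall>X\<in>meet_mT Pc. pt_type3 q X"
proof -
  obtain c where c: "c \<in> rel_norm q ` (- {0 :: 'a})" "Pc = norm_pencil q c"
    using assms(1) unfolding T_sls_pencils_eq by blast
  then have "c \<noteq> 1"
    using assms(2) norm_pencil_types(2)[OF c(1)] by simp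
  have minus_one_eq_one: "(- 1 :: 'a) = 1"
    using assms(3) minus_one_eq_one_iff_even by simp
  show ?thesis
    using \<open>c \<noteq> 1\<close> unfolding c(2) norm_pencil_types(4)[OF c(1)] minus_one_eq_one .
qed

lemma card_type3_T_sls_pencils_type2_slses:
  assumes "odd q"
  shows "card {Pc \<in> sls_pencil ` (T_slses q :: 'a vec3 set set set).
    (\<forall>L\<in>Pc. line_type3 q L) \<and> (\<forall>X\<in>meet_mT Pc. pt_type2 q X)} = 1"
proof -
  have "{c \<in> rel_norm q ` (- {0 :: 'a}). (\<forall>L\<in>norm_pencil q c. line_type3 q L)
      \<and> (\<forall>X\<in>meet_mT (norm_pencil q c). pt_type2 q X)} = {- 1} - {1}"
    using minus_one_in_rel_norm_image[where 'a = 'a]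
    by (auto simp: norm_pencil_types cong: conj_cong)
  then show ?thesis
    using assms minus_one_eq_one_iff_even by (simp add: card_filter_T_sls_pencils)
qed

lemma card_type3_T_sls_pencils_type3_slses:
  assumes "odd q"
  shows "card {Pc \<in> sls_pencil ` (T_slses q :: 'a vec3 set set set).
    (\<forall>L\<in>Pc. line_type3 q L) \<and> (\<forall>X\<in>meet_mT Pc. pt_type3 q X)} = q - 3"
proof -
  have "{c \<in> rel_norm q ` (- {0 :: 'a}). (\<forall>L\<in>norm_pencil q c. line_type3 q L)
      \<and> (\<forall>X\<in>meet_mT (norm_pencil q c). pt_type3 q X)} = rel_norm q ` (- {0}) - {1, - 1}"
    by (auto simp: norm_pencil_types cong: conj_cong)
  then show ?thesis
    using assms minus_one_eq_one_iff_even one_in_rel_norm_image[where 'a = 'a]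
      minus_one_in_rel_norm_image[where 'a = 'a] card_rel_norm_image
    by (simp add: card_filter_T_sls_pencils card_Diff_subset)
qed

end

theorem corollary2p4:
  fixes q :: nat
  defines "PS \<equiv> (sls_pencil ` T_slses q :: ('a::{field,finite}) vec3 set set set)"
  assumes "\<exists>p k. prime p \<and> k > 0 \<and> q = p ^ k"
    and "card (UNIV :: 'a set) = q ^ 3"
  shows "card PS = q - 1
    \<and> card {Pc \<in> PS. \<forall>L\<in>Pc. line_type2 q L} = 1
    \<and> card {Pc \<in> PS. \<forall>L\<in>Pc. line_type3 q L} = q - 2
    \<and> (even q \<longrightarrow>
          (\<forall>Pc\<in>PS. ((\<forall>L\<in>Pc. line_type2 q L) \<longrightarrow> (\<forall>X\<in>meet_mT Pc. pt_type2 q X))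
                   \<and> ((\<forall>L\<in>Pc. line_type3 q L) \<longrightarrow> (\<forall>X\<in>meet_mT Pc. pt_type3 q X))))
    \<and> (odd q \<longrightarrow>
          (\<forall>Pc\<in>PS. (\<forall>L\<in>Pc. line_type2 q L) \<longrightarrow> (\<forall>X\<in>meet_mT Pc. pt_type3 q X))
        \<and> card {Pc \<in> PS. (\<forall>L\<in>Pc. line_type3 q L) \<and> (\<forall>X\<in>meet_mT Pc. pt_type2 q X)} = 1
        \<and> card {Pc \<in> PS. (\<forall>L\<in>Pc. line_type3 q L) \<and> (\<forall>X\<in>meet_mT Pc. pt_type3 q X)} = q - 3)"
proof -
  note card = assms(3)
  show ?thesis
    unfolding PS_def
    using card_T_sls_pencils[OF card] card_type2_T_sls_pencils[OF card]
      card_type3_T_sls_pencils[OF card]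
      type2_T_sls_pencil_meets_mT[OF card] type3_T_sls_pencil_meets_mT[OF card]
      card_type3_T_sls_pencils_type2_slses[OF card] card_type3_T_sls_pencils_type3_slses[OF card]
    by blast
qed

end
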